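(* For $|q|<1$, $$\sum_{n=0}^\infty\frac{q^{4n^2}(-q;q^2)_{2n}\left(1-q^{4n+1}-q^{8n+2}-q^{8n+4}\right)}{(q^4;q^4)_{2n+1}}=\frac{(q;q)_\infty}{(q^4;q^4)_\infty}.$$
   Context: $(a;q)_n=\prod_{k=0}^{n-1}(1-aq^k)$, $(a;q)_\infty=\prod_{k\ge0}(1-aq^k)$. *)

theory Defs
  imports "HOL-Analysis.Analysis"
begin

definition qpoch :: "complex \<Rightarrow> complex \<Rightarrow> nat \<Rightarrow> complex" where
  "qpoch a q n = (\<Prod>k<n. 1 - a * q ^ k)"

definition qpoch_inf :: "complex \<Rightarrow> complex \<Rightarrow> complex" where
  "qpoch_inf a q = (\<Prod>k. 1 - a * q ^ k)"

end

theory Submission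
  imports Defs
begin

text \<open>
Expanding with the q-Pascal rule for the Gaussian binomials [N, m]_x gives the finite identity
  (z;x)_N = sum_{m<=N} [N, m]_x (a;x)_m (-z)^m x^(m choose 2) (a z x^m;x)_{N-m},
and Tannery's theorem lets N tend to infinity, since [N, m]_x tends to 1/(x;x)_m.
For x = q^2, a = -q, z = q, after dividing by (-q^2;q^2)_inf, this reads
  sum_m (-1)^m q^(m^2) (-q;q^2)_m / (q^4;q^4)_m = (q;q^2)_inf / (-q^2;q^2)_inf = (q;q)_inf / (q^4;q^4)_inf,
and the theorem is this series with the terms m = 2n and m = 2n + 1 combined.
\<close>

lemma qpoch_0 [simp]: "qpoch c x 0 = 1"
  by (simp add: qpoch_def)

lemma qpoch_Suc: "qpoch c x (Suc n) = qpoch c x n * (1 - c * x ^ n)"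
  by (simp add: qpoch_def)

lemma qpoch_Suc_shift: "qpoch c x (Suc n) = (1 - c) * qpoch (c * x) x n"
  unfolding qpoch_def by (subst prod.lessThan_Suc_shift) (simp add: mult.assoc)

lemma qpoch_add: "qpoch c x (m + n) = qpoch c x m * qpoch (c * x ^ m) x n"
  by (induction n) (auto simp: qpoch_Suc power_add algebra_simps)

fun qbinom :: "complex \<Rightarrow> nat \<Rightarrow> nat \<Rightarrow> complex" where
  "qbinom x 0 m = (if m = 0 then 1 else 0)"
| "qbinom x (Suc N) 0 = 1"
| "qbinom x (Suc N) (Suc m) = qbinom x N m + x ^ Suc m * qbinom x N (Suc m)"

lemma qbinom_0_right [simp]: "qbinom x N 0 = 1"
  by (cases N) auto

lemma qbinom_eq_0: "N < m \<Longrightarrow> qbinom x N m = 0"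
proof (induction N arbitrary: m)
  case (Suc N)
  then show ?case by (cases m) auto
qed simp

lemma sum_qbinom_Suc:
  "(\<Sum>m\<le>Suc N. qbinom x (Suc N) m * f m) = (\<Sum>m\<le>N. qbinom x N m * (f (Suc m) + x ^ m * f m))"
proof -
  have "(\<Sum>m\<le>Suc N. qbinom x (Suc N) m * f m)
      = (\<Sum>m\<le>N. qbinom x N m * f (Suc m)) + (f 0 + (\<Sum>m\<le>N. x ^ Suc m * qbinom x N (Suc m) * f (Suc m)))"
    by (simp only: sum.atMost_Suc_shift) (simp add: sum.distrib algebra_simps del: sum.atMost_Suc)
  also have "f 0 + (\<Sum>m\<le>N. x ^ Suc m * qbinom x N (Suc m) * f (Suc m))
      = (\<Sum>m\<le>Suc N. x ^ m * qbinom x N m * f m)"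
    by (simp only: sum.atMost_Suc_shift) simp
  also have "\<dots> = (\<Sum>m\<le>N. x ^ m * qbinom x N m * f m)"
    by (simp add: qbinom_eq_0)
  finally show ?thesis
    by (simp add: sum.distrib algebra_simps)
qed

(* For m > N the factor j = N vanishes, so the truncated subtraction N - j is harmless. *)
lemma qbinom_mult_qpoch: "qbinom x N m * qpoch x x m = (\<Prod>j<m. 1 - x ^ (N - j))"
proof (induction N arbitrary: m)
  case 0
  then show ?case
    by (cases m) (auto simp: qpoch_def prod.lessThan_Suc_shift)
next
  case (Suc N)
  show ?case
  proof (cases m)
    case (Suc k)
    define r where "r = (\<Prod>j<k. 1 - x ^ (N - j))"
    have "r * (1 - x ^ Suc k) + x ^ Suc k * (r * (1 - x ^ (N - k))) = (1 - x ^ Suc N) * r"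
    proof (cases "k \<le> N")
      case True
      then have "x ^ k * x ^ (N - k) = x ^ N"
        by (simp flip: power_add)
      then show ?thesis
        by (simp add: algebra_simps mult.left_commute[of _ r])
    next
      case False
      then have "r = 0"
        unfolding r_def by (intro prod_zero) (auto intro!: bexI[of _ N])
      then show ?thesis by simp
    qed
    moreover have "qbinom x (Suc N) m * qpoch x x m
        = qbinom x N k * qpoch x x k * (1 - x ^ Suc k) + x ^ Suc k * (qbinom x N (Suc k) * qpoch x x (Suc k))"
      using Suc by (simp add: qpoch_Suc algebra_simps)
    moreover have "(\<Prod>j<Suc k. 1 - x ^ (N - j)) = r * (1 - x ^ (N - k))"
      by (simp add: r_def)
    moreover have "(\<Prod>j<Suc k. 1 - x ^ (Suc N - j)) = (1 - x ^ Suc N) * r"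
      by (subst prod.lessThan_Suc_shift) (simp add: r_def)
    ultimately show ?thesis
      using Suc.IH[of k] Suc.IH[of "Suc k"] Suc by (simp add: r_def)
  qed simp
qed

definition qcoeff :: "complex \<Rightarrow> complex \<Rightarrow> complex \<Rightarrow> nat \<Rightarrow> complex" where
  "qcoeff x a z m = (- z) ^ m * x ^ (m choose 2) * qpoch a x m"

lemma qcoeff_0 [simp]: "qcoeff x a z 0 = 1"
  by (simp add: qcoeff_def numeral_2_eq_2)

lemma qcoeff_Suc: "qcoeff x a z (Suc m) = - z * x ^ m * (1 - a * x ^ m) * qcoeff x a z m"
proof -
  have "Suc m choose 2 = (m choose 2) + m"
    by (simp add: numeral_2_eq_2)
  then show ?thesis
    by (simp add: qcoeff_def qpoch_Suc power_add mult_ac)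
qed

lemma qcoeff_scale: "qcoeff x a (z * x) m = x ^ m * qcoeff x a z m"
proof -
  have "(- (z * x)) ^ m = ((- z) * x) ^ m"
    by simp
  then show ?thesis
    by (simp only: qcoeff_def power_mult_distrib mult_ac)
qed

lemma qpoch_finite_expansion:
  "(\<Sum>m\<le>N. qbinom x N m * qcoeff x a z m * qpoch (a * z * x ^ m) x (N - m)) = qpoch z x N"
proof (induction N arbitrary: z)
  case 0
  then show ?case by simp
next
  case (Suc N)
  define f where "f m = qcoeff x a z m * qpoch (a * z * x ^ m) x (Suc N - m)" for m
  have step: "f (Suc m) + x ^ m * f m = (1 - z) * (qcoeff x a (z * x) m * qpoch (a * (z * x) * x ^ m) x (N - m))"
    if "m \<le> N" for m
  proof -
    have "Suc N - m = Suc (N - m)" using that by simp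
    then show ?thesis
      unfolding f_def qcoeff_scale by (simp add: qcoeff_Suc qpoch_Suc_shift algebra_simps)
  qed
  have "(\<Sum>m\<le>Suc N. qbinom x (Suc N) m * f m) = (\<Sum>m\<le>N. qbinom x N m * (f (Suc m) + x ^ m * f m))"
    by (rule sum_qbinom_Suc)
  also have "\<dots> = (1 - z) * (\<Sum>m\<le>N. qbinom x N m * qcoeff x a (z * x) m * qpoch (a * (z * x) * x ^ m) x (N - m))"
    unfolding sum_distrib_left by (rule sum.cong) (simp_all add: step)
  also have "\<dots> = qpoch z x (Suc N)"
    by (simp add: Suc.IH qpoch_Suc_shift)
  finally show ?case
    by (simp add: f_def mult.assoc)
qed

lemma norm_mult_power_le: "norm x \<le> 1 \<Longrightarrow> norm (c * x ^ k) \<le> norm (c :: complex)"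
  by (simp add: norm_mult norm_power mult_left_le power_le_one)

lemma qpoch_nonzero:
  assumes "norm c < 1" "norm x \<le> 1"
  shows "qpoch c x n \<noteq> 0"
proof -
  have "1 - c * x ^ k \<noteq> 0" for k
    using norm_mult_power_le[OF assms(2), of c k] assms(1) by auto
  then show ?thesis
    by (simp add: qpoch_def)
qed

lemma norm_qpoch_le_power:
  assumes "norm x \<le> 1"
  shows "norm (qpoch a x n) \<le> (1 + norm a) ^ n"
proof -
  have "norm (qpoch a x n) \<le> (\<Prod>k<n. norm (1 - a * x ^ k))"
    unfolding qpoch_def by (rule norm_prod_le)
  also have "\<dots> \<le> (\<Prod>k<n. 1 + norm a)"
  proof (rule prod_mono)
    fix k
    show "0 \<le> norm (1 - a * x ^ k) \<and> norm (1 - a * x ^ k) \<le> 1 + norm a"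
      using norm_triangle_ineq4[of 1 "a * x ^ k"] norm_mult_power_le[OF assms, of a k] by simp
  qed
  finally show ?thesis by simp
qed

lemma norm_qpoch_le_exp:
  assumes "norm x < 1" "norm c \<le> C"
  shows "norm (qpoch c x n) \<le> exp (C / (1 - norm x))"
proof -
  have C: "0 \<le> C"
    using assms(2) norm_ge_zero[of c] by linarith
  have "norm (qpoch c x n) \<le> (\<Prod>k<n. 1 + C * norm x ^ k)"
    unfolding qpoch_def
  proof (rule order.trans[OF norm_prod_le], rule prod_mono)
    fix k
    have "norm (1 - c * x ^ k) \<le> 1 + norm c * norm x ^ k"
      using norm_triangle_ineq4[of 1 "c * x ^ k"] by (simp add: norm_mult norm_power)
    also have "\<dots> \<le> 1 + C * norm x ^ k"
      using assms(2) by (simp add: mult_right_mono)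
    finally show "0 \<le> norm (1 - c * x ^ k) \<and> norm (1 - c * x ^ k) \<le> 1 + C * norm x ^ k"
      by simp
  qed
  also have "\<dots> \<le> exp (\<Sum>k<n. C * norm x ^ k)"
    using C by (intro prod_le_exp_sum) auto
  also have "(\<Sum>k<n. C * norm x ^ k) \<le> (\<Sum>k. C * norm x ^ k)"
    using assms C by (intro sum_le_suminf summable_mult summable_geometric) auto
  also have "(\<Sum>k. C * norm x ^ k) = C / (1 - norm x)"
    using assms by (simp add: suminf_mult suminf_geometric divide_simps)
  finally show ?thesis by simp
qed

lemma norm_qpoch_ge:
  assumes "norm c \<le> 1" "norm x \<le> 1"
  shows "(1 - norm c) ^ n \<le> norm (qpoch c x n)"
proof -
  have "(1 - norm c) ^ n = (\<Prod>k<n. 1 - norm c)"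
    by simp
  also have "\<dots> \<le> (\<Prod>k<n. norm (1 - c * x ^ k))"
  proof (rule prod_mono)
    fix k
    show "0 \<le> 1 - norm c \<and> 1 - norm c \<le> norm (1 - c * x ^ k)"
      using assms(1) norm_triangle_ineq2[of 1 "c * x ^ k"] norm_mult_power_le[OF assms(2), of c k] by simp
  qed
  also have "\<dots> = norm (qpoch c x n)"
    by (simp add: qpoch_def prod_norm)
  finally show ?thesis .
qed

lemma convergent_prod_qpoch:
  fixes c x :: complex
  assumes "norm x < 1"
  shows "convergent_prod (\<lambda>k. 1 - c * x ^ k)"
proof -
  have "summable (\<lambda>k. norm c * norm x ^ k)"
    using assms by (intro summable_mult summable_geometric) auto
  moreover have "(\<lambda>k. norm ((1 - c * x ^ k) - 1)) = (\<lambda>k. norm c * norm x ^ k)"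
    by (simp add: fun_eq_iff norm_mult norm_power)
  ultimately have "summable (\<lambda>k. norm ((1 - c * x ^ k) - 1))"
    by simp
  then show ?thesis
    by (intro abs_convergent_prod_imp_convergent_prod summable_imp_abs_convergent_prod)
qed

lemma LIMSEQ_qpoch:
  assumes "norm x < 1"
  shows "(\<lambda>n. qpoch c x n) \<longlonglongrightarrow> qpoch_inf c x"
proof -
  have "(\<lambda>n. qpoch c x (Suc n)) \<longlonglongrightarrow> qpoch_inf c x"
    using convergent_prod_LIMSEQ[OF convergent_prod_qpoch[OF assms]]
    by (simp add: qpoch_def qpoch_inf_def lessThan_Suc_atMost)
  then show ?thesis
    by (rule LIMSEQ_imp_Suc)
qed

lemma qpoch_inf_split:
  assumes "norm x < 1"
  shows "qpoch_inf c x = qpoch c x m * qpoch_inf (c * x ^ m) x"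
proof (rule LIMSEQ_unique)
  show "(\<lambda>n. qpoch c x (m + n)) \<longlonglongrightarrow> qpoch_inf c x"
    using LIMSEQ_ignore_initial_segment[OF LIMSEQ_qpoch[OF assms], of c m]
    by (simp add: add.commute)
  show "(\<lambda>n. qpoch c x (m + n)) \<longlonglongrightarrow> qpoch c x m * qpoch_inf (c * x ^ m) x"
    unfolding qpoch_add by (intro tendsto_mult tendsto_const LIMSEQ_qpoch assms)
qed

lemma qpoch_inf_nonzero:
  assumes "norm c < 1" "norm x < 1"
  shows "qpoch_inf c x \<noteq> 0"
  unfolding qpoch_inf_def
proof (rule prodinf_nonzero[OF convergent_prod_qpoch[OF assms(2)]])
  fix k
  show "1 - c * x ^ k \<noteq> 0"
    using norm_mult_power_le[of x c k] assms by auto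
qed

lemma qbinom_tendsto:
  assumes "norm x < 1"
  shows "(\<lambda>N. qbinom x N m) \<longlonglongrightarrow> 1 / qpoch x x m"
proof -
  have nz: "qpoch x x m \<noteq> 0"
    using assms by (intro qpoch_nonzero) auto
  have "(\<lambda>N. x ^ (N - j)) \<longlonglongrightarrow> 0" for j
    by (rule LIMSEQ_offset[of _ j]) (simp add: LIMSEQ_power_zero assms)
  then have "(\<lambda>N. \<Prod>j<m. 1 - x ^ (N - j)) \<longlonglongrightarrow> (\<Prod>j<m. 1 - 0)"
    by (intro tendsto_prod tendsto_diff tendsto_const)
  then have "(\<lambda>N. qbinom x N m * qpoch x x m / qpoch x x m) \<longlonglongrightarrow> 1 / qpoch x x m"
    unfolding qbinom_mult_qpoch by (intro tendsto_divide tendsto_const nz) simp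
  then show ?thesis
    using nz by simp
qed

lemma norm_qbinom_le:
  assumes "norm x < 1"
  shows "norm (qbinom x N m) \<le> (2 / (1 - norm x)) ^ m"
proof -
  have "norm (\<Prod>j<m. 1 - x ^ (N - j)) \<le> (\<Prod>j<m. 2)"
  proof (rule order.trans[OF norm_prod_le], rule prod_mono)
    fix j
    have "norm (x ^ (N - j)) \<le> 1"
      using assms by (simp add: norm_power power_le_one)
    then show "0 \<le> norm (1 - x ^ (N - j)) \<and> norm (1 - x ^ (N - j)) \<le> 2"
      using norm_triangle_ineq4[of 1 "x ^ (N - j)"] by simp
  qed
  then have "norm (qbinom x N m) * norm (qpoch x x m) \<le> 2 ^ m"
    by (simp flip: norm_mult qbinom_mult_qpoch)
  moreover have "norm (qbinom x N m) * (1 - norm x) ^ m \<le> norm (qbinom x N m) * norm (qpoch x x m)"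
    using assms by (intro mult_left_mono norm_qpoch_ge) auto
  ultimately show ?thesis
    using assms by (simp add: power_divide pos_le_divide_eq)
qed

lemma norm_qcoeff_le:
  assumes "norm x \<le> 1"
  shows "norm (qcoeff x a z m) \<le> (norm z * (1 + norm a)) ^ m * norm x ^ (m choose 2)"
proof -
  have "norm (qcoeff x a z m) = norm z ^ m * norm x ^ (m choose 2) * norm (qpoch a x m)"
    by (simp add: qcoeff_def norm_mult norm_power)
  also have "\<dots> \<le> norm z ^ m * norm x ^ (m choose 2) * (1 + norm a) ^ m"
    by (intro mult_left_mono norm_qpoch_le_power assms) auto
  finally show ?thesis
    by (simp add: power_mult_distrib mult_ac)
qed

lemma summable_power_mult_power_choose_two:
  fixes B t :: real
  assumes "0 \<le> B" "0 \<le> t" "t < 1"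
  shows "summable (\<lambda>m. B ^ m * t ^ (m choose 2))"
proof -
  have "(\<lambda>n. B * t ^ n) \<longlonglongrightarrow> B * 0"
    using assms by (intro tendsto_mult tendsto_const LIMSEQ_power_zero) auto
  then have "eventually (\<lambda>n. B * t ^ n < 1/2) sequentially"
    by (rule order_tendstoD) simp
  then obtain N where N: "\<And>n. n \<ge> N \<Longrightarrow> B * t ^ n < 1/2"
    by (auto simp: eventually_sequentially)
  show ?thesis
  proof (rule summable_ratio_test[of "1/2" N])
    fix n assume "N \<le> n"
    have "B ^ Suc n * t ^ (Suc n choose 2) = (B * t ^ n) * (B ^ n * t ^ (n choose 2))"
      by (simp add: numeral_2_eq_2 power_add)
    also have "\<dots> \<le> 1/2 * (B ^ n * t ^ (n choose 2))"
      using N[OF \<open>N \<le> n\<close>] assms by (intro mult_right_mono) auto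
    finally show "norm (B ^ Suc n * t ^ (Suc n choose 2)) \<le> 1/2 * norm (B ^ n * t ^ (n choose 2))"
      using assms by simp
  qed simp
qed

lemma qpoch_inf_expansion:
  assumes x: "norm x < 1"
  shows "(\<lambda>m. qcoeff x a z m / qpoch x x m * qpoch_inf (a * z * x ^ m) x) sums qpoch_inf z x"
proof -
  define f where "f m N = qbinom x N m * qcoeff x a z m * qpoch (a * z * x ^ m) x (N - m)" for m N
  define b where "b m = qcoeff x a z m / qpoch x x m * qpoch_inf (a * z * x ^ m) x" for m
  define B where "B = 2 / (1 - norm x) * (norm z * (1 + norm a))"
  define K where "K = exp (norm (a * z) / (1 - norm x))"
  have d: "0 < 1 - norm x"
    using x by simp
  have partial_sums: "(\<Sum>m. f m N) = qpoch z x N" for N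
  proof -
    have "(\<Sum>m. f m N) = (\<Sum>m\<le>N. f m N)"
      by (rule suminf_finite) (auto simp: f_def qbinom_eq_0)
    then show ?thesis
      by (simp add: f_def qpoch_finite_expansion)
  qed
  have lim: "(\<lambda>N. f m N) \<longlonglongrightarrow> b m" for m
  proof -
    have "(\<lambda>N. qpoch (a * z * x ^ m) x (N - m)) \<longlonglongrightarrow> qpoch_inf (a * z * x ^ m) x"
      by (rule LIMSEQ_offset[of _ m]) (simp add: LIMSEQ_qpoch x)
    then have "(\<lambda>N. f m N) \<longlonglongrightarrow> 1 / qpoch x x m * qcoeff x a z m * qpoch_inf (a * z * x ^ m) x"
      unfolding f_def by (intro tendsto_mult tendsto_const qbinom_tendsto x)
    then show ?thesis
      by (simp add: b_def)
  qed
  have bound: "norm (f m N) \<le> K * (B ^ m * norm x ^ (m choose 2))" for m N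
  proof -
    have "norm (f m N) = norm (qbinom x N m) * norm (qcoeff x a z m) * norm (qpoch (a * z * x ^ m) x (N - m))"
      by (simp add: f_def norm_mult)
    also have "\<dots> \<le> (2 / (1 - norm x)) ^ m * ((norm z * (1 + norm a)) ^ m * norm x ^ (m choose 2)) * K"
      unfolding K_def using x
      by (intro mult_mono norm_qbinom_le norm_qcoeff_le norm_qpoch_le_exp norm_mult_power_le) auto
    finally show ?thesis
      by (simp only: B_def power_mult_distrib mult_ac)
  qed
  have dominated: "summable (\<lambda>m. K * (B ^ m * norm x ^ (m choose 2)))"
    unfolding B_def using d x by (intro summable_mult summable_power_mult_power_choose_two) auto
  have "eventually (\<lambda>N. summable (\<lambda>m. norm (f m N))) sequentially
      \<and> summable (\<lambda>m. norm (b m)) \<and> (\<lambda>N. \<Sum>m. f m N) \<longlonglongrightarrow> suminf b"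
    by (rule tannerys_theorem[OF lim _ dominated]) (auto intro: always_eventually bound)
  then have "summable b" "(\<lambda>N. qpoch z x N) \<longlonglongrightarrow> suminf b"
    by (auto simp: partial_sums summable_norm_cancel)
  then show ?thesis
    unfolding b_def[abs_def] using LIMSEQ_unique LIMSEQ_qpoch[OF x] summable_sums by metis
qed

lemma qpoch_mult_qpoch_uminus: "qpoch a x n * qpoch (- a) x n = qpoch (a\<^sup>2) (x\<^sup>2) n"
  unfolding qpoch_def prod.distrib[symmetric]
  by (rule prod.cong) (simp_all add: algebra_simps power2_eq_square flip: power_mult)

lemma qpoch_double: "qpoch c x (2 * n) = qpoch c (x\<^sup>2) n * qpoch (c * x) (x\<^sup>2) n"
proof (induction n)
  case (Suc n)
  have "qpoch c x (2 * Suc n) = qpoch c x (2 * n) * (1 - c * x ^ (2 * n)) * (1 - c * x * x ^ (2 * n))"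
    by (simp add: qpoch_Suc mult_ac)
  then show ?case
    using Suc by (simp add: qpoch_Suc mult_ac flip: power_mult)
qed simp

lemma qpoch_inf_double:
  assumes "norm x < 1"
  shows "qpoch_inf c x = qpoch_inf c (x\<^sup>2) * qpoch_inf (c * x) (x\<^sup>2)"
proof (rule LIMSEQ_unique)
  have "strict_mono (\<lambda>n::nat. 2 * n)"
    by (simp add: strict_mono_def)
  then show "(\<lambda>n. qpoch c x (2 * n)) \<longlonglongrightarrow> qpoch_inf c x"
    using LIMSEQ_subseq_LIMSEQ[OF LIMSEQ_qpoch[OF assms]] by (simp add: o_def)
  have "norm (x\<^sup>2) < 1"
    using assms by (simp add: norm_power power_less_one_iff)
  then show "(\<lambda>n. qpoch c x (2 * n)) \<longlonglongrightarrow> qpoch_inf c (x\<^sup>2) * qpoch_inf (c * x) (x\<^sup>2)"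
    unfolding qpoch_double by (intro tendsto_mult LIMSEQ_qpoch)
qed

lemma qpoch_inf_mult_qpoch_inf_uminus:
  assumes "norm x < 1"
  shows "qpoch_inf a x * qpoch_inf (- a) x = qpoch_inf (a\<^sup>2) (x\<^sup>2)"
proof (rule LIMSEQ_unique)
  show "(\<lambda>n. qpoch a x n * qpoch (- a) x n) \<longlonglongrightarrow> qpoch_inf a x * qpoch_inf (- a) x"
    using assms by (intro tendsto_mult LIMSEQ_qpoch)
  have "norm (x\<^sup>2) < 1"
    using assms by (simp add: norm_power power_less_one_iff)
  then show "(\<lambda>n. qpoch a x n * qpoch (- a) x n) \<longlonglongrightarrow> qpoch_inf (a\<^sup>2) (x\<^sup>2)"
    unfolding qpoch_mult_qpoch_uminus by (rule LIMSEQ_qpoch)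
qed

lemma qpoch_inf_ratio:
  assumes q: "norm q < 1"
  shows "qpoch_inf q (q\<^sup>2) / qpoch_inf (- (q\<^sup>2)) (q\<^sup>2) = qpoch_inf q q / qpoch_inf (q ^ 4) (q ^ 4)"
proof -
  have q2: "norm (q\<^sup>2) < 1"
    using q by (simp add: norm_power power_less_one_iff)
  have "qpoch_inf q q = qpoch_inf q (q\<^sup>2) * qpoch_inf (q\<^sup>2) (q\<^sup>2)"
    using qpoch_inf_double[OF q, of q] by (simp add: power2_eq_square)
  moreover have "qpoch_inf (q ^ 4) (q ^ 4) = qpoch_inf (q\<^sup>2) (q\<^sup>2) * qpoch_inf (- (q\<^sup>2)) (q\<^sup>2)"
    using qpoch_inf_mult_qpoch_inf_uminus[OF q2, of "q\<^sup>2"] by (simp flip: power_mult)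
  moreover have "qpoch_inf (q\<^sup>2) (q\<^sup>2) \<noteq> 0" "qpoch_inf (- (q\<^sup>2)) (q\<^sup>2) \<noteq> 0"
    by (rule qpoch_inf_nonzero; use q2 in simp)+
  ultimately show ?thesis
    by (simp add: field_simps)
qed

lemma qcoeff_q_squared: "qcoeff (q\<^sup>2) (- q) q m = (-1) ^ m * q ^ m\<^sup>2 * qpoch (- q) (q\<^sup>2) m"
proof -
  have "(- q) ^ m * (q\<^sup>2) ^ (m choose 2) = (-1) ^ m * q ^ (m + 2 * (m choose 2))"
    by (simp only: power_minus[of q] mult.assoc power_add power_mult)
  also have "m + 2 * (m choose 2) = m\<^sup>2"
    by (induction m) (simp_all add: numeral_2_eq_2 power2_eq_square)
  finally show ?thesis
    by (simp add: qcoeff_def)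
qed

lemma sums_signed_qpoch_series:
  assumes q: "norm q < 1"
  shows "(\<lambda>m. (-1) ^ m * q ^ m\<^sup>2 * qpoch (- q) (q\<^sup>2) m / qpoch (q ^ 4) (q ^ 4) m)
           sums (qpoch_inf q q / qpoch_inf (q ^ 4) (q ^ 4))"
proof -
  have q2: "norm (q\<^sup>2) < 1"
    using q by (simp add: norm_power power_less_one_iff)
  define C where "C = qpoch_inf (- (q\<^sup>2)) (q\<^sup>2)"
  have C: "C \<noteq> 0"
    unfolding C_def using q2 by (intro qpoch_inf_nonzero) auto
  have "qcoeff (q\<^sup>2) (- q) q m / qpoch (q\<^sup>2) (q\<^sup>2) m * qpoch_inf (- q * q * (q\<^sup>2) ^ m) (q\<^sup>2)
      = (-1) ^ m * q ^ m\<^sup>2 * qpoch (- q) (q\<^sup>2) m / qpoch (q ^ 4) (q ^ 4) m * C" for m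
  proof -
    have e: "- q * q * (q\<^sup>2) ^ m = - (q\<^sup>2) * (q\<^sup>2) ^ m"
      by (simp add: power2_eq_square)
    have "C = qpoch (- (q\<^sup>2)) (q\<^sup>2) m * qpoch_inf (- (q\<^sup>2) * (q\<^sup>2) ^ m) (q\<^sup>2)"
      unfolding C_def by (rule qpoch_inf_split[OF q2])
    moreover have "qpoch (q ^ 4) (q ^ 4) m = qpoch (q\<^sup>2) (q\<^sup>2) m * qpoch (- (q\<^sup>2)) (q\<^sup>2) m"
      using qpoch_mult_qpoch_uminus[of "q\<^sup>2" "q\<^sup>2" m] by (simp flip: power_mult)
    moreover have "qpoch (- (q\<^sup>2)) (q\<^sup>2) m \<noteq> 0" "qpoch (q\<^sup>2) (q\<^sup>2) m \<noteq> 0"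
      by (rule qpoch_nonzero; use q2 in simp)+
    ultimately show ?thesis
      unfolding qcoeff_q_squared e by (simp add: field_simps)
  qed
  then have scaled: "(\<lambda>m. (-1) ^ m * q ^ m\<^sup>2 * qpoch (- q) (q\<^sup>2) m / qpoch (q ^ 4) (q ^ 4) m * C)
      sums qpoch_inf q (q\<^sup>2)"
    using qpoch_inf_expansion[OF q2, of "- q" q] by simp
  have "(\<lambda>m. (-1) ^ m * q ^ m\<^sup>2 * qpoch (- q) (q\<^sup>2) m / qpoch (q ^ 4) (q ^ 4) m)
      sums (qpoch_inf q (q\<^sup>2) / C)"
    using sums_divide[OF scaled, of C] C by simp
  then show ?thesis
    using qpoch_inf_ratio[OF q] by (simp add: C_def)
qed

lemma signed_qpoch_series_pair:
  assumes q: "norm q < 1"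
  shows "(\<Sum>m = 2 * n..<2 * n + 2. (-1) ^ m * q ^ m\<^sup>2 * qpoch (- q) (q\<^sup>2) m / qpoch (q ^ 4) (q ^ 4) m)
    = q ^ (4 * n\<^sup>2) * qpoch (- q) (q\<^sup>2) (2 * n) * (1 - q ^ (4 * n + 1) - q ^ (8 * n + 2) - q ^ (8 * n + 4))
      / qpoch (q ^ 4) (q ^ 4) (2 * n + 1)"
proof -
  define g where "g m = (-1) ^ m * q ^ m\<^sup>2 * qpoch (- q) (q\<^sup>2) m / qpoch (q ^ 4) (q ^ 4) m" for m
  define A where "A = q ^ (4 * n\<^sup>2)"
  define B where "B = q ^ (4 * n)"
  define P where "P = qpoch (- q) (q\<^sup>2) (2 * n)"
  define Q where "Q = qpoch (q ^ 4) (q ^ 4) (2 * n)"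
  define D where "D = 1 - q ^ 4 * B\<^sup>2"
  have "(q ^ 4) ^ (2 * n) = B\<^sup>2"
    by (simp add: B_def mult_ac flip: power_mult)
  then have Q_Suc: "qpoch (q ^ 4) (q ^ 4) (2 * n + 1) = Q * D"
    by (simp add: Q_def D_def qpoch_Suc)
  have "(q\<^sup>2) ^ (2 * n) = B"
    by (simp add: B_def flip: power_mult)
  then have P_Suc: "qpoch (- q) (q\<^sup>2) (2 * n + 1) = P * (1 + q * B)"
    by (simp add: P_def qpoch_Suc)
  have "(2 * n)\<^sup>2 = 4 * n\<^sup>2" "(2 * n + 1)\<^sup>2 = 4 * n\<^sup>2 + 4 * n + 1"
    by (simp_all add: power2_eq_square algebra_simps)
  then have g_even: "g (2 * n) = A * P / Q" and g_odd: "g (2 * n + 1) = - (A * B * q * (P * (1 + q * B))) / (Q * D)"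
    unfolding g_def Q_Suc P_Suc by (simp_all add: A_def B_def P_def Q_def power_add)
  have nonzero: "qpoch (q ^ 4) (q ^ 4) k \<noteq> 0" for k
    using q by (intro qpoch_nonzero) (simp_all add: norm_power power_less_one_iff power_le_one)
  have "Q \<noteq> 0" "Q * D \<noteq> 0"
    using nonzero[of "2 * n"] nonzero[of "2 * n + 1"] unfolding Q_Suc by (simp_all add: Q_def)
  then have "g (2 * n) + g (2 * n + 1) = A * P * (1 - q * B - q\<^sup>2 * B\<^sup>2 - q ^ 4 * B\<^sup>2) / (Q * D)"
    unfolding g_even g_odd by (simp add: field_simps D_def) (simp add: algebra_simps eval_nat_numeral)
  also have "\<dots> = q ^ (4 * n\<^sup>2) * qpoch (- q) (q\<^sup>2) (2 * n) * (1 - q ^ (4 * n + 1) - q ^ (8 * n + 2) - q ^ (8 * n + 4))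
      / qpoch (q ^ 4) (q ^ 4) (2 * n + 1)"
    unfolding Q_Suc A_def P_def B_def power_mult[symmetric] power_add[symmetric]
      mult.commute[of q] power_Suc2[symmetric]
    by (simp add: algebra_simps)
  finally show ?thesis
    by (simp add: g_def numeral_2_eq_2)
qed

theorem mainTheorem9:
  fixes q :: complex
  assumes "norm q < 1"
  shows "(\<lambda>n. q ^ (4 * n\<^sup>2) * qpoch (- q) (q\<^sup>2) (2 * n)
              * (1 - q ^ (4 * n + 1) - q ^ (8 * n + 2) - q ^ (8 * n + 4))
              / qpoch (q ^ 4) (q ^ 4) (2 * n + 1))
         sums (qpoch_inf q q / qpoch_inf (q ^ 4) (q ^ 4))"
proof -
  let ?g = "\<lambda>m. (-1) ^ m * q ^ m\<^sup>2 * qpoch (- q) (q\<^sup>2) m / qpoch (q ^ 4) (q ^ 4) m"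
  have "(\<lambda>n. sum ?g {n * 2..<n * 2 + 2}) sums (qpoch_inf q q / qpoch_inf (q ^ 4) (q ^ 4))"
    by (rule sums_group[OF sums_signed_qpoch_series[OF assms]]) simp
  then show ?thesis
    using signed_qpoch_series_pair[OF assms] by (simp add: mult.commute)
qed

end
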